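(* Let $1\le n\le l$ be integers, put $c=2^l-3^n$ and $r=\gcd(l,n)$. Let $s\in S_{l,n}$ and consider the integer $3n+c$ cycle associated with $s$, whose elements are the integers $\varphi(t)$ for $t\in\sigma(s)$; its odd elements are the values $\varphi(t)$ with $t\in\sigma(s)$ and $t_1=1$. Then $$\min_{t\in\sigma(s)}\varphi(t)\le M_{l,n}\qquad\text{and}\qquad N_{l,n}\le \max\{\varphi(t): t\in\sigma(s),\ t_1=1\},$$ where $$N_{l,n}=2M_{l,n}-\sum_{i=0}^{r-1}2^{\,i l/r}\,3^{\,n-1-i n/r}.$$
   Context: $S_{l,n}$ denotes the set of 0-1 sequences $s=(s_1,\ldots,s_l)$ of length $l$ with exactly $n$ ones. For such $s$, $$\varphi(s)=\sum_{j=1}^{l} s_j\, 3^{\,s_{j+1}+\cdots+s_{l}}\,2^{\,j-1}.$$ The left shift is $\lambda_l(s_1,\ldots,s_l)=(s_2,\ldots,s_l,s_1)$ and $\sigma(s)=\{\lambda_l^k(s):k=1,\ldots,l\}$ is the orbit of $s$ under rotation. $M_{l,n}=\max_{s\in S_{l,n}}\min_{t\in\sigma(s)}\varphi(t)$. For an odd integer $c$, the $3n+c$ map on integers sends $x$ to $(3x+c)/2$ if $x$ is odd and to $x/2$ if $x$ is even. With $c=2^l-3^n$, the sequence $x_i=\varphi(\lambda_l^i(s))$, $i=0,\ldots,l$, is a cycle of this map of length $l$ (obtained by multiplying by $c$ the rational Collatz cycle through $\varphi(s)/(2^l-3^n)$), in which $x_i$ is odd exactly when the first entry of $\lambda_l^i(s)$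 is $1$; this cycle is called the $3n+c$ cycle corresponding to $s$ (it need not be primitive, i.e. its elements may share a common divisor). *)

theory Defs
  imports Main
begin

text \<open>0-1 sequences of length l are lists over {0,1}; entry s_j is s ! (j-1).\<close>

definition S :: "nat \<Rightarrow> nat \<Rightarrow> nat list set" where
  "S l n = {s. length s = l \<and> set s \<subseteq> {0,1} \<and> sum_list s = n}"

definition phi :: "nat list \<Rightarrow> int" where
  "phi s = (\<Sum>j<length s. int (s ! j) * 3 ^ (\<Sum>k\<in>{Suc j..<length s}. s ! k) * 2 ^ j)"

definition lshift :: "nat list \<Rightarrow> nat list" where
  "lshift s = rotate1 s"

definition orbit :: "nat list \<Rightarrow> nat list set" where
  "orbit s = {(lshift ^^ k) s | k. k \<in> {1..length s}}"

definition M :: "nat \<Rightarrow> nat \<Rightarrow> int" where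
  "M l n = Max ((\<lambda>s. Min (phi ` orbit s)) ` S l n)"

definition N :: "nat \<Rightarrow> nat \<Rightarrow> int" where
  "N l n = 2 * M l n -
     (\<Sum>i<gcd l n. 2 ^ (i * l div gcd l n) * 3 ^ (n - 1 - i * n div gcd l n))"

end

theory Submission imports Defs begin

text \<open>Write phi(t) = sum_{j<n} 3^(n-1-j) 2^(p_j), where p_j is the position of the (j+1)-th one
  of t. For a cyclic sequence the walk m |-> l * (ones among the first m entries) - n * m is
  periodic. Starting just before a maximum gives a rotation t of s with first entry 1 whose ones
  lie late, l j <= n p_j; starting at a minimum gives a rotation t' of a maximiser of M(l,n) whose
  ones lie early, n q_j <= l j. So q_j <= p_j, hence 2 * 2^(q_j) <= 2^(p_j) unless
  q_j = p_j = l j / n, which forces n | l j, i.e. j is one of the r multiples of n/r below n.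
  Summing, 2 M(l,n) <= 2 phi(t') <= phi(t) + sum_{i<r} 2^(il/r) 3^(n-1-in/r).\<close>

definition prefix_ones :: "nat list \<Rightarrow> nat \<Rightarrow> nat" where
  "prefix_ones t m = (\<Sum>i<m. t ! i)"

lemma prefix_ones_Suc: "prefix_ones t (Suc m) = prefix_ones t m + t ! m"
  by (simp add: prefix_ones_def)

lemma prefix_ones_mono: "a \<le> b \<Longrightarrow> prefix_ones t a \<le> prefix_ones t b"
  unfolding prefix_ones_def by (rule sum_mono2) auto

lemma prefix_ones_length: "prefix_ones t (length t) = sum_list t"
  by (simp add: prefix_ones_def sum_list_sum_nth atLeast0LessThan)

lemma sum_list_rotate: "sum_list (rotate k xs) = (sum_list xs :: 'a::comm_monoid_add)"
  by (metis append_take_drop_id sum_list_append rotate_drop_take add.commute)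

lemma funpow_lshift: "lshift ^^ k = rotate k"
proof -
  have "lshift = rotate1" by (rule ext) (simp add: lshift_def)
  thus ?thesis by (simp add: rotate_def)
qed

lemma orbit_eq_rotations: "orbit s = (\<lambda>k. rotate k s) ` {1..length s}"
  by (auto simp: orbit_def funpow_lshift)

lemma finite_orbit: "finite (orbit s)"
  by (simp add: orbit_eq_rotations)

lemma rotate_in_orbit:
  assumes "s \<noteq> []" shows "rotate a s \<in> orbit s"
proof -
  let ?L = "length s"
  define k where "k = (if a mod ?L = 0 then ?L else a mod ?L)"
  have k: "k \<in> {1..?L}" using assms by (auto simp: k_def Suc_le_eq)
  have "rotate k s = rotate a s"
    using assms by (metis k_def rotate_conv_mod mod_self)
  thus ?thesis using k unfolding orbit_eq_rotations by (metis image_eqI)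
qed

lemma finite_S: "finite (S l n)"
proof -
  have "S l n \<subseteq> {xs. set xs \<subseteq> {0,1} \<and> length xs = l}" by (auto simp: S_def)
  moreover have "finite {xs. set xs \<subseteq> {0::nat,1} \<and> length xs = l}"
    by (rule finite_lists_length_eq) simp
  ultimately show ?thesis by (rule finite_subset)
qed

lemma rotate_in_S: "s \<in> S l n \<Longrightarrow> rotate k s \<in> S l n"
  by (auto simp: S_def sum_list_rotate)

lemma orbit_subset_S: "s \<in> S l n \<Longrightarrow> orbit s \<subseteq> S l n"
  by (auto simp: orbit_eq_rotations rotate_in_S)

lemma S_nth_cases: "t \<in> S l n \<Longrightarrow> j < l \<Longrightarrow> t ! j = 0 \<or> t ! j = 1"
  unfolding S_def using nth_mem by fastforce

lemma prefix_ones_S: "t \<in> S l n \<Longrightarrow> prefix_ones t l = n"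
  using prefix_ones_length[of t] by (simp add: S_def)

lemma bij_betw_prefix_ones:
  assumes t: "t \<in> S l n"
  shows "bij_betw (prefix_ones t) {j. j < l \<and> t ! j = 1} {..<n}"
proof -
  let ?P = "{j. j < l \<and> t ! j = 1}"
  have inj: "inj_on (prefix_ones t) ?P"
  proof (rule linorder_inj_onI)
    fix x y assume "x < y" "x \<in> ?P" "y \<in> ?P"
    then have "prefix_ones t (Suc x) \<le> prefix_ones t y" by (intro prefix_ones_mono) simp
    then show "prefix_ones t x \<noteq> prefix_ones t y"
      using \<open>x \<in> ?P\<close> by (simp add: prefix_ones_Suc)
  qed auto
  have sub: "prefix_ones t ` ?P \<subseteq> {..<n}"
  proof
    fix k assume "k \<in> prefix_ones t ` ?P"
    then obtain j where j: "j \<in> ?P" "k = prefix_ones t j" by auto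
    then have "prefix_ones t (Suc j) \<le> prefix_ones t l" by (intro prefix_ones_mono) simp
    then show "k \<in> {..<n}" using j prefix_ones_S[OF t] by (simp add: prefix_ones_Suc)
  qed
  have "n = (\<Sum>j<l. t ! j)" using prefix_ones_S[OF t] by (simp add: prefix_ones_def)
  also have "\<dots> = (\<Sum>j<l. if t ! j = 1 then 1 else 0)"
    using S_nth_cases[OF t] by (intro sum.cong) auto
  also have "\<dots> = card ?P" by (simp add: sum.If_cases Int_def)
  finally have "card (prefix_ones t ` ?P) = card {..<n}"
    using card_image[OF inj] by simp
  then have "prefix_ones t ` ?P = {..<n}"
    by (intro card_subset_eq[OF _ sub]) simp_all
  with inj show ?thesis by (simp add: bij_betw_def)
qed

lemma phi_eq_sum_over_ones:
  assumes t: "t \<in> S l n"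
  shows "phi t = (\<Sum>j | j < l \<and> t ! j = 1. 3 ^ (n - 1 - prefix_ones t j) * 2 ^ j)"
proof -
  have L: "length t = l" using t by (simp add: S_def)
  have tail: "(\<Sum>k\<in>{Suc j..<l}. t ! k) = n - prefix_ones t (Suc j)" if "j < l" for j
  proof -
    have "prefix_ones t (Suc j) + (\<Sum>k\<in>{Suc j..<l}. t ! k) = (\<Sum>k\<in>{0..<l}. t ! k)"
      unfolding prefix_ones_def atLeast0LessThan[symmetric]
      by (rule sum.atLeastLessThan_concat) (use that in auto)
    then show ?thesis using prefix_ones_S[OF t] by (simp add: prefix_ones_def atLeast0LessThan)
  qed
  have "phi t = (\<Sum>j<l. if t ! j = 1 then 3 ^ (n - 1 - prefix_ones t j) * 2 ^ j else 0)"
    unfolding phi_def L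
    using tail S_nth_cases[OF t] by (intro sum.cong) (auto simp: prefix_ones_Suc)
  also have "\<dots> = (\<Sum>j | j < l \<and> t ! j = 1. 3 ^ (n - 1 - prefix_ones t j) * 2 ^ j)"
    by (simp add: sum.inter_filter[symmetric])
  finally show ?thesis .
qed

lemma phi_by_one_positions:
  assumes t: "t \<in> S l n"
  obtains p where "phi t = (\<Sum>j<n. 3 ^ (n - 1 - j) * 2 ^ p j)"
    and "\<And>j. j < n \<Longrightarrow> p j < l \<and> t ! p j = 1 \<and> prefix_ones t (p j) = j"
proof
  let ?P = "{j. j < l \<and> t ! j = 1}"
  have bij: "bij_betw (prefix_ones t) ?P {..<n}" by (rule bij_betw_prefix_ones[OF t])
  define p where "p = the_inv_into ?P (prefix_ones t)"
  have "phi t = (\<Sum>j\<in>?P. 3 ^ (n - 1 - prefix_ones t j) * 2 ^ p (prefix_ones t j))"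
    unfolding phi_eq_sum_over_ones[OF t] p_def
    using bij by (intro sum.cong) (auto simp: bij_betw_imp_inj_on the_inv_into_f_f)
  also have "\<dots> = (\<Sum>j<n. 3 ^ (n - 1 - j) * 2 ^ p j)"
    by (rule sum.reindex_bij_betw[OF bij])
  finally show "phi t = (\<Sum>j<n. 3 ^ (n - 1 - j) * 2 ^ p j)" .
  show "p j < l \<and> t ! p j = 1 \<and> prefix_ones t (p j) = j" if "j < n" for j
    using bij_betw_the_inv_into[OF bij] f_the_inv_into_f_bij_betw[OF bij] that
    by (auto simp: p_def bij_betw_def)
qed

definition walk :: "nat list \<Rightarrow> nat \<Rightarrow> int" where
  "walk s m = int (length s) * int (\<Sum>k<m. s ! (k mod length s)) - int (sum_list s) * int m"

lemma walk_shift: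
  assumes "s \<noteq> []" "j \<le> length s"
  shows "walk s (a + j) - walk s a
    = int (length s) * int (prefix_ones (rotate a s) j) - int (sum_list s) * int j"
proof -
  let ?f = "\<lambda>k. s ! (k mod length s)"
  have "prefix_ones (rotate a s) j = (\<Sum>k<j. ?f (k + a))"
    unfolding prefix_ones_def using assms by (intro sum.cong) (auto simp: nth_rotate add.commute)
  also have "\<dots> = sum ?f {a..<a + j}"
    using sum.shift_bounds_nat_ivl[of ?f 0 a j] by (simp add: atLeast0LessThan add.commute)
  finally have "(\<Sum>k<a + j. ?f k) = (\<Sum>k<a. ?f k) + prefix_ones (rotate a s) j"
    using sum.atLeastLessThan_concat[of 0 a "a + j" ?f] by (simp add: atLeast0LessThan)
  then show ?thesis by (simp add: walk_def algebra_simps)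
qed

lemma walk_periodic: "s \<noteq> [] \<Longrightarrow> walk s (m + length s) = walk s m"
  using walk_shift[of s "length s" m] prefix_ones_length[of "rotate m s"]
  by (simp add: sum_list_rotate)

lemma walk_mod: assumes "s \<noteq> []" shows "walk s m = walk s (m mod length s)"
proof -
  have "walk s (b + c * length s) = walk s b" for b c
  proof (induction c)
    case (Suc c)
    have "b + Suc c * length s = (b + c * length s) + length s" by simp
    then show ?case by (simp only: walk_periodic[OF assms] Suc.IH)
  qed simp
  from this[of "m mod length s" "m div length s"] show ?thesis by simp
qed

lemma walk_attains_min: assumes "s \<noteq> []" shows "\<exists>a. \<forall>m. walk s a \<le> walk s m"
proof -
  let ?B = "walk s ` {..<length s}"
  have "finite ?B" "?B \<noteq> {}" using assms by auto
  then have "Min ?B \<in> ?B" by (rule Min_in)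
  then obtain a where "walk s a = Min ?B" by (metis imageE)
  have "walk s a \<le> walk s m" for m
  proof -
    have "walk s (m mod length s) \<in> ?B" using assms by simp
    then show ?thesis
      using walk_mod[OF assms, of m] Min_le[OF \<open>finite ?B\<close>] \<open>walk s a = Min ?B\<close> by metis
  qed
  then show ?thesis by blast
qed

lemma walk_attains_max: assumes "s \<noteq> []" shows "\<exists>b. \<forall>m. walk s m \<le> walk s b"
proof -
  let ?B = "walk s ` {..<length s}"
  have "finite ?B" "?B \<noteq> {}" using assms by auto
  then have "Max ?B \<in> ?B" by (rule Max_in)
  then obtain b where "walk s b = Max ?B" by (metis imageE)
  have "walk s m \<le> walk s b" for m
  proof -
    have "walk s (m mod length s) \<in> ?B" using assms by simp
    then show ?thesis
      using walk_mod[OF assms, of m] Max_ge[OF \<open>finite ?B\<close>] \<open>walk s b = Max ?B\<close> by metis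
  qed
  then show ?thesis by blast
qed

lemma early_rotation:
  assumes s: "s \<in> S l n" and "0 < l"
  obtains t where "t \<in> orbit s" and "\<And>j. j \<le> l \<Longrightarrow> n * j \<le> l * prefix_ones t j"
proof -
  have sne: "s \<noteq> []" and L: "length s = l" and sum: "sum_list s = n"
    using s \<open>0 < l\<close> by (auto simp: S_def)
  obtain a where a: "\<And>m. walk s a \<le> walk s m" using walk_attains_min[OF sne] by blast
  show thesis
  proof (rule that[of "rotate a s"])
    show "rotate a s \<in> orbit s" by (rule rotate_in_orbit[OF sne])
    show "n * j \<le> l * prefix_ones (rotate a s) j" if "j \<le> l" for j
      using walk_shift[OF sne, of j a] a[of "a + j"] that
      by (simp add: L sum flip: of_nat_mult)
  qed
qed

lemma late_rotation:
  assumes s: "s \<in> S l n" and "1 \<le> n"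
  obtains t where "t \<in> orbit s" and "hd t = 1"
    and "\<And>j. j \<le> l \<Longrightarrow> l * prefix_ones t j + n \<le> n * j + l"
proof -
  have sne: "s \<noteq> []" and L: "length s = l" and sum: "sum_list s = n"
    using s \<open>1 \<le> n\<close> by (auto simp: S_def)
  then have "0 < l" by auto
  obtain m where m: "\<And>k. walk s k \<le> walk s m" using walk_attains_max[OF sne] by blast
  \<comment> \<open>start one step before the maximum, so that the first step goes up\<close>
  define b where "b = m + l - 1"
  have b1: "walk s (b + 1) = walk s m"
    using walk_periodic[OF sne, of m] \<open>0 < l\<close> by (simp add: b_def L)
  have step: "walk s (b + 1) - walk s b = int l * int (rotate b s ! 0) - int n"
    using walk_shift[OF sne, of 1 b] \<open>0 < l\<close> by (simp add: L sum prefix_ones_def)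
  have "int n \<le> int l * int (rotate b s ! 0)" using step b1 m[of b] by simp
  then have "rotate b s ! 0 \<noteq> 0" using \<open>1 \<le> n\<close> by (cases "rotate b s ! 0 = 0") auto
  then have hd1: "rotate b s ! 0 = 1"
    using S_nth_cases[OF rotate_in_S[OF s], of 0 b] \<open>0 < l\<close> by auto
  show thesis
  proof (rule that[of "rotate b s"])
    show "rotate b s \<in> orbit s" by (rule rotate_in_orbit[OF sne])
    show "hd (rotate b s) = 1" using hd1 sne by (simp add: hd_conv_nth)
    show "l * prefix_ones (rotate b s) j + n \<le> n * j + l" if "j \<le> l" for j
      using walk_shift[OF sne, of j b] step hd1 b1 m[of "b + j"] that
      by (simp add: L sum flip: of_nat_mult)
  qed
qed

lemma dvd_mult_iff_div_gcd_dvd: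
  fixes n l j :: nat assumes "0 < n"
  shows "n dvd l * j \<longleftrightarrow> n div gcd l n dvd j"
proof -
  define r a b where "r = gcd l n" and "a = n div r" and "b = l div r"
  have "0 < r" using assms by (simp add: r_def)
  have n: "n = r * a" and l: "l = r * b" by (simp_all add: a_def b_def r_def)
  have "coprime a b"
    unfolding a_def b_def r_def using div_gcd_coprime[of n l] assms
    by (simp add: gcd.commute coprime_commute)
  have "n dvd l * j \<longleftrightarrow> a dvd b * j"
    using \<open>0 < r\<close> by (simp add: n l mult.assoc)
  also have "\<dots> \<longleftrightarrow> a dvd j"
    using \<open>coprime a b\<close> by (simp add: coprime_dvd_mult_right_iff)
  finally show ?thesis by (simp add: a_def r_def)
qed

lemma sum_over_dvd_mult_eq_gcd_sum:
  fixes l n :: nat assumes "0 < n"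
  shows "(\<Sum>j<n. if n dvd l * j then 3 ^ (n - 1 - j) * 2 ^ (l * j div n) else 0 :: int)
    = (\<Sum>i<gcd l n. 2 ^ (i * l div gcd l n) * 3 ^ (n - 1 - i * n div gcd l n))"
proof -
  define r a where "r = gcd l n" and "a = n div r"
  have "0 < r" using assms by (simp add: r_def)
  have n: "n = r * a" by (simp add: a_def r_def)
  then have "0 < a" using assms by (cases a) auto
  have dvd: "n dvd l * j \<longleftrightarrow> a dvd j" for j
    using dvd_mult_iff_div_gcd_dvd[OF assms] by (simp add: a_def r_def)
  have multiples: "{j. j < n \<and> n dvd l * j} = (\<lambda>i. a * i) ` {..<r}"
  proof (intro set_eqI iffI)
    fix j assume "j \<in> {j. j < n \<and> n dvd l * j}"
    then have "j < n" "a dvd j" using dvd by auto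
    with \<open>0 < a\<close> show "j \<in> (\<lambda>i. a * i) ` {..<r}"
      by (auto elim!: dvdE simp: n mult.commute[of r])
  next
    fix j assume "j \<in> (\<lambda>i. a * i) ` {..<r}"
    then obtain i where "j = a * i" "i < r" by blast
    moreover have "a * i < n" using \<open>i < r\<close> \<open>0 < a\<close> by (simp add: n)
    ultimately show "j \<in> {j. j < n \<and> n dvd l * j}" by (simp add: dvd)
  qed
  have "(\<Sum>j<n. if n dvd l * j then 3 ^ (n - 1 - j) * 2 ^ (l * j div n) else 0 :: int)
      = (\<Sum>j\<in>(\<lambda>i. a * i) ` {..<r}. 3 ^ (n - 1 - j) * 2 ^ (l * j div n))"
    by (simp add: sum.inter_filter[symmetric] multiples)
  also have "\<dots> = (\<Sum>i<r. 3 ^ (n - 1 - a * i) * 2 ^ (l * (a * i) div n))"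
    using \<open>0 < a\<close> by (simp add: sum.reindex inj_on_def)
  also have "\<dots> = (\<Sum>i<r. 2 ^ (i * l div r) * 3 ^ (n - 1 - i * n div r))"
  proof (rule sum.cong)
    fix i
    have "l * (a * i) div n = i * l div r"
      using \<open>0 < a\<close> by (simp add: n div_mult_mult2 mult.commute mult.left_commute)
    moreover have "i * n div r = a * i" using \<open>0 < r\<close> by (simp add: n)
    ultimately show "3 ^ (n - 1 - a * i) * 2 ^ (l * (a * i) div n)
      = (2 ^ (i * l div r) * 3 ^ (n - 1 - i * n div r) :: int)" by simp
  qed simp
  finally show ?thesis by (simp add: r_def)
qed

lemma double_pow2_le:
  fixes c :: int
  assumes "0 \<le> c" "0 < n" "n * q \<le> m" "m \<le> n * p"
  shows "2 * (c * 2 ^ q) \<le> c * 2 ^ p + (if n dvd m then c * 2 ^ (m div n) else 0)"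
proof (cases "q < p")
  case True
  then have "(2::int) * 2 ^ q \<le> 2 ^ p"
    using power_increasing[of "Suc q" p "2::int"] by simp
  then have "2 * (c * 2 ^ q) \<le> c * 2 ^ p"
    using mult_left_mono[OF _ \<open>0 \<le> c\<close>] by (simp add: mult.left_commute)
  moreover have "0 \<le> (if n dvd m then c * 2 ^ (m div n) else 0)" using \<open>0 \<le> c\<close> by simp
  ultimately show ?thesis by linarith
next
  case False
  then have "n * p \<le> n * q" by simp
  with assms have "m = n * p" "n * q = n * p" by linarith+
  with \<open>0 < n\<close> show ?thesis by simp
qed

lemma twice_phi_early_le_phi_late:
  assumes t: "t \<in> S l n" and t': "t' \<in> S l n" and "0 < n"
    and late: "\<And>j. j \<le> l \<Longrightarrow> l * prefix_ones t j + n \<le> n * j + l"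
    and early: "\<And>j. j \<le> l \<Longrightarrow> n * j \<le> l * prefix_ones t' j"
  shows "2 * phi t' \<le> phi t
    + (\<Sum>j<n. if n dvd l * j then 3 ^ (n - 1 - j) * 2 ^ (l * j div n) else 0)"
proof -
  obtain p where phi_t: "phi t = (\<Sum>j<n. 3 ^ (n - 1 - j) * 2 ^ p j)"
    and p: "\<And>j. j < n \<Longrightarrow> p j < l \<and> t ! p j = 1 \<and> prefix_ones t (p j) = j"
    using phi_by_one_positions[OF t] by blast
  obtain q where phi_t': "phi t' = (\<Sum>j<n. 3 ^ (n - 1 - j) * 2 ^ q j)"
    and q: "\<And>j. j < n \<Longrightarrow> q j < l \<and> t' ! q j = 1 \<and> prefix_ones t' (q j) = j"
    using phi_by_one_positions[OF t'] by blast
  have "n * q j \<le> l * j" if "j < n" for j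
    using early[of "q j"] q[OF that] by simp
  moreover have "l * j \<le> n * p j" if "j < n" for j
    using late[of "Suc (p j)"] p[OF that] by (simp add: prefix_ones_Suc)
  ultimately have "2 * (3 ^ (n - 1 - j) * 2 ^ q j) \<le> (3::int) ^ (n - 1 - j) * 2 ^ p j
      + (if n dvd l * j then 3 ^ (n - 1 - j) * 2 ^ (l * j div n) else 0)"
    if "j < n" for j
    using double_pow2_le[of "3 ^ (n - 1 - j)" n "q j" "l * j" "p j"] \<open>0 < n\<close> that by simp
  then have "(\<Sum>j<n. 2 * (3 ^ (n - 1 - j) * 2 ^ q j)) \<le> (\<Sum>j<n. 3 ^ (n - 1 - j) * 2 ^ p j
      + (if n dvd l * j then 3 ^ (n - 1 - j) * 2 ^ (l * j div n) else 0 :: int))"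
    by (intro sum_mono) simp
  then show ?thesis by (simp add: phi_t phi_t' sum.distrib sum_distrib_left)
qed

theorem mainTheorem2:
  fixes l n :: nat and s :: "nat list"
  assumes "1 \<le> n" and "n \<le> l" and "s \<in> S l n"
  shows "Min (phi ` orbit s) \<le> M l n
       \<and> N l n \<le> Max (phi ` {t \<in> orbit s. hd t = 1})"
proof
  have fin: "finite ((\<lambda>s. Min (phi ` orbit s)) ` S l n)" using finite_S by simp
  show "Min (phi ` orbit s) \<le> M l n"
    unfolding M_def using assms(3) fin by (intro Max_ge) auto
  have "M l n \<in> (\<lambda>s. Min (phi ` orbit s)) ` S l n"
    unfolding M_def using assms(3) fin by (intro Max_in) auto
  then obtain s' where s': "s' \<in> S l n" and M: "M l n = Min (phi ` orbit s')" by auto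
  obtain t where t: "t \<in> orbit s" "hd t = 1"
    and late: "\<And>j. j \<le> l \<Longrightarrow> l * prefix_ones t j + n \<le> n * j + l"
    using late_rotation[OF assms(3,1)] by blast
  obtain t' where t': "t' \<in> orbit s'" and early: "\<And>j. j \<le> l \<Longrightarrow> n * j \<le> l * prefix_ones t' j"
    using early_rotation[OF s'] assms(1,2) by auto
  have tS: "t \<in> S l n" and t'S: "t' \<in> S l n"
    using t(1) t' orbit_subset_S assms(3) s' by blast+
  have "M l n \<le> phi t'" unfolding M using t' finite_orbit by (intro Min_le) auto
  moreover have "phi t \<le> Max (phi ` {t \<in> orbit s. hd t = 1})"
    using t finite_orbit by (intro Max_ge) auto
  moreover have "2 * phi t' \<le> phi t + (\<Sum>i<gcd l n. 2 ^ (i * l div gcd l n) * 3 ^ (n - 1 - i * n div gcd l n))"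
    using twice_phi_early_le_phi_late[OF tS t'S _ late early] sum_over_dvd_mult_eq_gcd_sum assms(1)
    by simp
  ultimately show "N l n \<le> Max (phi ` {t \<in> orbit s. hd t = 1})"
    unfolding N_def by linarith
qed

end
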